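(* Let $n\ge1$, $U_n$ the family of bounded subsets of $\mathbb R^n$, and $\mu:U_n\to B_2$ a measure. (a) If $\mu$ is derivable on the topological closure $\overline A$ of a set $A\in U_n$, then: (a.1) the set $\mathrm{supp}_A\,d\mu=\{x\in A:d\mu(x)=1\}$ is finite; (a.2) for every $x\in A$ there exists $\varepsilon>0$ such that for every $B\in U_n$ with $x\in B$ and $d(B)<\varepsilon$ one has $\mu(B-\{x\})=0$; (a.3) $\mu(A)=\sum_{x\in A}\mu(\{x\})$; (a.4) for every partition $\{A_i\}_{i\in I}$ of $A$ into subsets $A_i\subset A$, $\mu(A)=\sum_{i\in I}\mu(A_i)$. (b) If $\mu$ is derivable (on every set of $U_n$), then the set $\mathrm{supp}\,d\mu=\{x\in\mathbb R^n:d\mu(x)=1\}$ is locally finite.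
   Context: $B_2=\{0,1\}$. $\mu$ is a measure if for every sequence of pairwise disjoint sets of $U_n$ whose union is in $U_n$, only finitely many have $\mu$-value 1 and $\mu$ of the union is their number modulo 2. $d(B)=\sup_{x,y\in B}\|x-y\|$. $\mu$ is derivable at $x$ if there exist $\varepsilon>0$, $a\in B_2$ with $\mu(B)=a$ for all $B\in U_n$ containing $x$ with $d(B)<\varepsilon$; then $d\mu(x)=a$. Derivable on a set means derivable at each of its points. A sum $\sum_{j\in J}a_j$ of elements of $B_2$ indexed by an arbitrary set is defined when only finitely many $a_j$ equal 1, and then equals that number modulo 2. $H\subset\mathbb R^n$ is locally finite if $A\cap H$ is finite for every bounded $A$. *)

theory Defs
  imports "HOL-Analysis.Analysis" "HOL-Library.Z2"
begin

text \<open>B_2 = {0,1} is the two-element field \<open>bit\<close>. U_n = bounded subsets of \<open>real^'n\<close>.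
  d(B) is \<open>diameter B\<close>.\<close>

definition b2_summable :: "('j \<Rightarrow> bit) \<Rightarrow> 'j set \<Rightarrow> bool" where
  "b2_summable a J \<longleftrightarrow> finite {j\<in>J. a j = 1}"

definition b2_sum :: "('j \<Rightarrow> bit) \<Rightarrow> 'j set \<Rightarrow> bit" where
  "b2_sum a J = of_nat (card {j\<in>J. a j = 1})"

definition is_b2_measure :: "(('a::real_normed_vector) set \<Rightarrow> bit) \<Rightarrow> bool" where
  "is_b2_measure \<mu> \<longleftrightarrow>
     (\<forall>S :: nat \<Rightarrow> 'a set.
        (\<forall>i. bounded (S i)) \<and> disjoint_family S \<and> bounded (\<Union>i. S i) \<longrightarrow>
          finite {i. \<mu> (S i) = 1} \<and> \<mu> (\<Union>i. S i) = of_nat (card {i. \<mu> (S i) = 1}))"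

definition derivable_at :: "(('a::real_normed_vector) set \<Rightarrow> bit) \<Rightarrow> 'a \<Rightarrow> bool" where
  "derivable_at \<mu> x \<longleftrightarrow>
     (\<exists>\<epsilon>>0. \<exists>a. \<forall>B. bounded B \<and> x \<in> B \<and> diameter B < \<epsilon> \<longrightarrow> \<mu> B = a)"

definition dmu :: "(('a::real_normed_vector) set \<Rightarrow> bit) \<Rightarrow> 'a \<Rightarrow> bit" where
  "dmu \<mu> x = (THE a. \<exists>\<epsilon>>0. \<forall>B. bounded B \<and> x \<in> B \<and> diameter B < \<epsilon> \<longrightarrow> \<mu> B = a)"

definition derivable_on :: "(('a::real_normed_vector) set \<Rightarrow> bit) \<Rightarrow> 'a set \<Rightarrow> bool" where
  "derivable_on \<mu> S \<longleftrightarrow> (\<forall>x\<in>S. derivable_at \<mu> x)"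

definition locally_finite_set :: "('a::real_normed_vector) set \<Rightarrow> bool" where
  "locally_finite_set H \<longleftrightarrow> (\<forall>A. bounded A \<longrightarrow> finite (A \<inter> H))"

end

theory Submission
  imports Defs
begin

text \<open>Near a point \<open>y\<close> at which \<open>\<mu>\<close> is derivable, every small set containing \<open>y\<close> has measure
  \<open>\<mu> {y}\<close>; splitting off \<open>{y}\<close> by additivity shows that \<open>\<mu>\<close> vanishes on the small sets
  \<open>B - {y}\<close>. So in a small ball around \<open>y\<close> the only possible atom is \<open>y\<close>, and on subsets of the
  ball \<open>\<mu>\<close> is the mod 2 count of atoms (\<open>\<mu>\<close> is purely atomic there). Finite additivity carries
  this over to finite unions of such balls, and by compactness finitely many of them cover the
  closure of a bounded set \<open>A\<close>. All claims then follow from pure atomicity on \<open>A\<close>: the atoms in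
  \<open>A\<close> are finite in number, and regrouping them along a partition gives (a.4).\<close>

lemma b2_sum_finite_support:
  fixes a :: "'j \<Rightarrow> bit"
  assumes "finite K" "K \<subseteq> J" "\<And>j. j \<in> J - K \<Longrightarrow> a j = 0"
  shows "b2_summable a J" "b2_sum a J = (\<Sum>j\<in>K. a j)"
proof -
  have supp: "{j\<in>J. a j = 1} = {j\<in>K. a j = 1}"
    using assms(2,3) by force
  show "b2_summable a J"
    unfolding b2_summable_def supp using assms(1) by simp
  have "(\<Sum>j\<in>K. a j) = (\<Sum>j\<in>{j\<in>K. a j = 1}. a j)"
    by (rule sum.mono_neutral_right) (use assms(1) in auto)
  also have "\<dots> = (\<Sum>j\<in>{j\<in>K. a j = 1}. 1)"
    by (rule sum.cong) auto
  finally show "b2_sum a J = (\<Sum>j\<in>K. a j)"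
    unfolding b2_sum_def supp by simp
qed

lemma b2_sum_Un_disjoint:
  fixes a :: "'j \<Rightarrow> bit"
  assumes "b2_summable a A" "b2_summable a B" "A \<inter> B = {}"
  shows "b2_summable a (A \<union> B)" "b2_sum a (A \<union> B) = b2_sum a A + b2_sum a B"
proof -
  have supp: "{j\<in>A \<union> B. a j = 1} = {j\<in>A. a j = 1} \<union> {j\<in>B. a j = 1}"
    by auto
  show "b2_summable a (A \<union> B)"
    using assms(1,2) unfolding b2_summable_def supp by simp
  have "card {j\<in>A \<union> B. a j = 1} = card {j\<in>A. a j = 1} + card {j\<in>B. a j = 1}"
    unfolding supp using assms unfolding b2_summable_def by (intro card_Un_disjoint) auto
  then show "b2_sum a (A \<union> B) = b2_sum a A + b2_sum a B"
    unfolding b2_sum_def by simp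
qed

lemma b2_sum_cong:
  assumes "\<And>j. j \<in> J \<Longrightarrow> a j = b j"
  shows "b2_summable a J = b2_summable b J" "b2_sum a J = b2_sum b J"
proof -
  have "{j\<in>J. a j = 1} = {j\<in>J. b j = 1}"
    using assms by auto
  then show "b2_summable a J = b2_summable b J" "b2_sum a J = b2_sum b J"
    unfolding b2_summable_def b2_sum_def by simp_all
qed

lemma b2_sum_partition:
  fixes a :: "'a \<Rightarrow> bit" and P :: "'i \<Rightarrow> 'a set"
  assumes summable: "b2_summable a A"
    and disj: "disjoint_family_on P I" and cover: "(\<Union>i\<in>I. P i) = A"
  shows "b2_summable (\<lambda>i. b2_sum a (P i)) I" "b2_sum a A = b2_sum (\<lambda>i. b2_sum a (P i)) I"
proof -
  define F where "F = {x\<in>A. a x = 1}"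
  define K where "K = {i\<in>I. P i \<inter> F \<noteq> {}}"
  have F: "finite F"
    using summable unfolding b2_summable_def F_def .
  have disj_K: "disjoint_family_on (\<lambda>i. P i \<inter> F) K"
    using disj unfolding disjoint_family_on_def K_def by blast
  have "finite (\<Union>i\<in>K. P i \<inter> F)"
    using F by (rule finite_subset[rotated]) blast
  then have K: "finite K"
    using infinite_disjoint_family_imp_infinite_UNION[OF _ _ disj_K] unfolding K_def by blast
  have block: "b2_sum a (P i) = (\<Sum>x\<in>P i \<inter> F. a x)" if "i \<in> I" for i
    by (rule b2_sum_finite_support(2)) (use F that cover in \<open>auto simp: F_def\<close>)
  have outside_K: "b2_sum a (P i) = 0" if "i \<in> I - K" for i
    using block[of i] that by (simp add: K_def)
  have "K \<subseteq> I"
    by (simp add: K_def)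
  then have outer: "b2_summable (\<lambda>i. b2_sum a (P i)) I"
      "b2_sum (\<lambda>i. b2_sum a (P i)) I = (\<Sum>i\<in>K. b2_sum a (P i))"
    using b2_sum_finite_support[OF K, of I "\<lambda>i. b2_sum a (P i)"] outside_K by simp_all
  show "b2_summable (\<lambda>i. b2_sum a (P i)) I"
    by (fact outer(1))
  have F_blocks: "F = (\<Union>i\<in>K. P i \<inter> F)"
    using cover unfolding K_def F_def by blast
  have "b2_sum a A = (\<Sum>x\<in>F. a x)"
    by (rule b2_sum_finite_support(2)[OF F]) (auto simp: F_def)
  also have "\<dots> = (\<Sum>x\<in>(\<Union>i\<in>K. P i \<inter> F). a x)"
    using F_blocks by (rule arg_cong)
  also have "\<dots> = (\<Sum>i\<in>K. \<Sum>x\<in>P i \<inter> F. a x)"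
    by (rule sum.UNION_disjoint[OF K]) (use F disj_K in \<open>auto simp: disjoint_family_on_def\<close>)
  also have "\<dots> = (\<Sum>i\<in>K. b2_sum a (P i))"
    using block by (simp add: K_def)
  also have "\<dots> = b2_sum (\<lambda>i. b2_sum a (P i)) I"
    by (rule outer(2)[symmetric])
  finally show "b2_sum a A = b2_sum (\<lambda>i. b2_sum a (P i)) I" .
qed

lemma b2_measure_empty:
  assumes "is_b2_measure \<mu>"
  shows "\<mu> {} = 0"
proof -
  have "finite {i::nat. \<mu> {} = 1}"
    using assms[unfolded is_b2_measure_def, rule_format, of "\<lambda>i. {}"]
    by (simp add: disjoint_family_on_def)
  then show ?thesis
    by (cases "\<mu> {} = 1") auto
qed

lemma b2_measure_Un:
  assumes m: "is_b2_measure \<mu>" and "bounded A" "bounded B" "A \<inter> B = {}"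
  shows "\<mu> (A \<union> B) = \<mu> A + \<mu> B"
proof -
  define S where "S i = (if i = 0 then A else if i = 1 then B else {})" for i :: nat
  have S_Un: "(\<Union>i. S i) = A \<union> B"
    unfolding S_def by (auto split: if_splits)
  have "disjoint_family S"
    using assms(4) unfolding S_def disjoint_family_on_def by auto
  moreover have "\<forall>i. bounded (S i)"
    using assms unfolding S_def by auto
  moreover have "bounded (\<Union>i. S i)"
    unfolding S_Un using assms(2,3) by simp
  ultimately have "\<mu> (\<Union>i. S i) = of_nat (card {i. \<mu> (S i) = 1})"
    using m unfolding is_b2_measure_def by blast
  moreover have "{i. \<mu> (S i) = 1} = (if \<mu> A = 1 then {0} else {}) \<union> (if \<mu> B = 1 then {1} else {})"
    using b2_measure_empty[OF m] unfolding S_def by (auto split: if_splits)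
  ultimately show ?thesis
    unfolding S_Un by (cases "\<mu> A = 1"; cases "\<mu> B = 1") simp_all
qed

lemma b2_measure_finite:
  assumes "is_b2_measure \<mu>" "finite F"
  shows "\<mu> F = (\<Sum>x\<in>F. \<mu> {x})"
  using assms(2)
proof (induction F rule: finite_induct)
  case empty
  show ?case
    using b2_measure_empty[OF assms(1)] by simp
next
  case (insert x F)
  have "\<mu> ({x} \<union> F) = \<mu> {x} + \<mu> F"
    using insert.hyps by (intro b2_measure_Un[OF assms(1)]) (auto intro: finite_imp_bounded)
  then show ?case
    using insert by simp
qed

lemma derivable_atE:
  assumes "derivable_at \<mu> x"
  obtains \<epsilon> where "\<epsilon> > 0" "\<And>B. bounded B \<Longrightarrow> x \<in> B \<Longrightarrow> diameter B < \<epsilon> \<Longrightarrow> \<mu> B = \<mu> {x}"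
proof -
  obtain \<epsilon> a where \<epsilon>: "\<epsilon> > 0" "\<forall>B. bounded B \<and> x \<in> B \<and> diameter B < \<epsilon> \<longrightarrow> \<mu> B = a"
    using assms unfolding derivable_at_def by blast
  then have "\<mu> {x} = a"
    by simp
  with \<epsilon> show ?thesis
    using that by blast
qed

lemma dmu_eq_singleton:
  assumes "derivable_at \<mu> x"
  shows "dmu \<mu> x = \<mu> {x}"
proof -
  obtain \<epsilon> where \<epsilon>: "\<epsilon> > 0" "\<And>B. bounded B \<Longrightarrow> x \<in> B \<Longrightarrow> diameter B < \<epsilon> \<Longrightarrow> \<mu> B = \<mu> {x}"
    using derivable_atE[OF assms] by blast
  show ?thesis
    unfolding dmu_def
  proof (rule the_equality)
    show "\<exists>\<epsilon>>0. \<forall>B. bounded B \<and> x \<in> B \<and> diameter B < \<epsilon> \<longrightarrow> \<mu> B = \<mu> {x}"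
      using \<epsilon> by blast
  next
    fix b
    assume "\<exists>\<epsilon>>0. \<forall>B. bounded B \<and> x \<in> B \<and> diameter B < \<epsilon> \<longrightarrow> \<mu> B = b"
    then show "b = \<mu> {x}"
      by force
  qed
qed

lemma derivable_at_punctured_vanish:
  assumes m: "is_b2_measure \<mu>" and "derivable_at \<mu> x"
  shows "\<exists>\<epsilon>>0. \<forall>B. bounded B \<and> x \<in> B \<and> diameter B < \<epsilon> \<longrightarrow> \<mu> (B - {x}) = 0"
proof -
  obtain \<epsilon> where \<epsilon>: "\<epsilon> > 0" "\<And>B. bounded B \<Longrightarrow> x \<in> B \<Longrightarrow> diameter B < \<epsilon> \<Longrightarrow> \<mu> B = \<mu> {x}"
    using derivable_atE[OF assms(2)] by blast
  have "\<mu> (B - {x}) = 0" if B: "bounded B" "x \<in> B" "diameter B < \<epsilon>" for B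
  proof -
    have "\<mu> {x} = \<mu> ({x} \<union> (B - {x}))"
      using \<epsilon>(2)[OF B] B(2) by (simp add: insert_absorb)
    also have "\<dots> = \<mu> {x} + \<mu> (B - {x})"
      using B(1) by (intro b2_measure_Un[OF m]) (auto intro: bounded_subset)
    finally show ?thesis
      by (metis add_cancel_right_right)
  qed
  with \<epsilon>(1) show ?thesis
    by blast
qed

definition purely_atomic_on :: "('a set \<Rightarrow> bit) \<Rightarrow> 'a set \<Rightarrow> bool" where
  "purely_atomic_on \<mu> S \<longleftrightarrow>
     (\<forall>D\<subseteq>S. b2_summable (\<lambda>x. \<mu> {x}) D \<and> \<mu> D = b2_sum (\<lambda>x. \<mu> {x}) D)"

lemma purely_atomic_on_subset:
  "purely_atomic_on \<mu> T \<Longrightarrow> S \<subseteq> T \<Longrightarrow> purely_atomic_on \<mu> S"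
  unfolding purely_atomic_on_def by blast

lemma purely_atomic_on_empty:
  "is_b2_measure \<mu> \<Longrightarrow> purely_atomic_on \<mu> {}"
  by (simp add: purely_atomic_on_def b2_summable_def b2_sum_def b2_measure_empty)

lemma purely_atomic_on_Un:
  assumes m: "is_b2_measure \<mu>" and bounded: "bounded S" "bounded T"
    and S: "purely_atomic_on \<mu> S" and T: "purely_atomic_on \<mu> T"
  shows "purely_atomic_on \<mu> (S \<union> T)"
  unfolding purely_atomic_on_def
proof (intro allI impI)
  fix D
  assume D: "D \<subseteq> S \<union> T"
  define f where "f = (\<lambda>x. \<mu> {x})"
  have disj: "(D \<inter> S) \<inter> (D - S) = {}"
    by blast
  have DS: "b2_summable f (D \<inter> S)" "\<mu> (D \<inter> S) = b2_sum f (D \<inter> S)"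
    using S unfolding purely_atomic_on_def f_def by blast+
  have "D - S \<subseteq> T"
    using D by blast
  then have DT: "b2_summable f (D - S)" "\<mu> (D - S) = b2_sum f (D - S)"
    using T unfolding purely_atomic_on_def f_def by blast+
  have "\<mu> D = \<mu> ((D \<inter> S) \<union> (D - S))"
    by (simp add: Int_Diff_Un)
  also have "\<dots> = \<mu> (D \<inter> S) + \<mu> (D - S)"
    using bounded \<open>D - S \<subseteq> T\<close> disj
    by (intro b2_measure_Un[OF m]) (auto intro: bounded_subset)
  also have "\<dots> = b2_sum f D"
    using b2_sum_Un_disjoint(2)[OF DS(1) DT(1) disj] DS(2) DT(2) by (simp add: Int_Diff_Un)
  finally show "b2_summable (\<lambda>x. \<mu> {x}) D \<and> \<mu> D = b2_sum (\<lambda>x. \<mu> {x}) D"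
    using b2_sum_Un_disjoint(1)[OF DS(1) DT(1) disj] by (simp add: Int_Diff_Un f_def)
qed

lemma purely_atomic_on_UN:
  assumes m: "is_b2_measure \<mu>" and "finite Y"
    and "\<And>y. y \<in> Y \<Longrightarrow> bounded (S y)" "\<And>y. y \<in> Y \<Longrightarrow> purely_atomic_on \<mu> (S y)"
  shows "purely_atomic_on \<mu> (\<Union>y\<in>Y. S y)"
  using assms(2-4)
proof (induction Y rule: finite_induct)
  case empty
  then show ?case
    using purely_atomic_on_empty[OF m] by simp
next
  case (insert y Y)
  then show ?case
    by (simp add: purely_atomic_on_Un[OF m] bounded_UN)
qed

lemma purely_atomic_on_ball:
  fixes \<mu> :: "'a::real_normed_vector set \<Rightarrow> bit"
  assumes m: "is_b2_measure \<mu>" and "derivable_at \<mu> y"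
  shows "\<exists>r>0. purely_atomic_on \<mu> (ball y r)"
proof -
  obtain \<epsilon> where \<epsilon>: "\<epsilon> > 0"
    "\<And>B. bounded B \<Longrightarrow> y \<in> B \<Longrightarrow> diameter B < \<epsilon> \<Longrightarrow> \<mu> (B - {y}) = 0"
    using derivable_at_punctured_vanish[OF assms] by blast
  define r where "r = \<epsilon> / 3"
  have "r > 0"
    using \<epsilon>(1) by (simp add: r_def)
  have vanish: "\<mu> (D - {y}) = 0" if D: "D \<subseteq> ball y r" for D
  proof -
    have "diameter (insert y D) \<le> 2 * r"
    proof (rule diameter_le)
      fix u v
      assume "u \<in> insert y D" "v \<in> insert y D"
      then have "dist y u \<le> r" "dist y v \<le> r"
        using D \<open>r > 0\<close> by (auto simp: subset_iff)
      then show "norm (u - v) \<le> 2 * r"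
        using dist_triangle[of u v y] by (simp add: dist_commute flip: dist_norm)
    qed simp
    moreover have "bounded (insert y D)"
      using bounded_subset[OF bounded_ball D] by simp
    moreover have "2 * r < \<epsilon>"
      using \<epsilon>(1) by (simp add: r_def)
    ultimately have "\<mu> (insert y D - {y}) = 0"
      by (intro \<epsilon>(2)) auto
    then show ?thesis
      by simp
  qed
  have "purely_atomic_on \<mu> (ball y r)"
    unfolding purely_atomic_on_def
  proof (intro allI impI)
    fix D
    assume D: "D \<subseteq> ball y r"
    have atoms: "\<mu> {x} = 0" if x: "x \<in> D - (D \<inter> {y})" for x
    proof -
      have "{x} \<subseteq> ball y r"
        using x D by blast
      then have "\<mu> ({x} - {y}) = 0"
        by (rule vanish)
      moreover have "x \<noteq> y"
        using x by blast
      ultimately show ?thesis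
        by simp
    qed
    have "bounded (D - {y})"
      using bounded_subset[OF bounded_ball, of D y r] D by blast
    then have "\<mu> ((D \<inter> {y}) \<union> (D - {y})) = \<mu> (D \<inter> {y}) + \<mu> (D - {y})"
      by (intro b2_measure_Un[OF m]) (auto intro: finite_imp_bounded)
    then have "\<mu> D = \<mu> (D \<inter> {y})"
      using vanish[OF D] by (simp add: Int_Diff_Un)
    also have "\<dots> = (\<Sum>x\<in>D \<inter> {y}. \<mu> {x})"
      by (rule b2_measure_finite[OF m]) simp
    finally show "b2_summable (\<lambda>x. \<mu> {x}) D \<and> \<mu> D = b2_sum (\<lambda>x. \<mu> {x}) D"
      using b2_sum_finite_support[of "D \<inter> {y}" D "\<lambda>x. \<mu> {x}"] atoms by simp
  qed
  with \<open>r > 0\<close> show ?thesis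
    by blast
qed

lemma purely_atomic_on_compact:
  fixes \<mu> :: "'a::real_normed_vector set \<Rightarrow> bit"
  assumes m: "is_b2_measure \<mu>" and "compact K" and "derivable_on \<mu> K"
  shows "purely_atomic_on \<mu> K"
proof -
  have "\<forall>y\<in>K. \<exists>r>0. purely_atomic_on \<mu> (ball y r)"
    using assms(3) purely_atomic_on_ball[OF m] unfolding derivable_on_def by blast
  then obtain r where r: "\<And>y. y \<in> K \<Longrightarrow> r y > 0 \<and> purely_atomic_on \<mu> (ball y (r y))"
    by metis
  have "K \<subseteq> (\<Union>y\<in>K. ball y (r y))"
    using r by force
  then obtain Y where Y: "Y \<subseteq> K" "finite Y" "K \<subseteq> (\<Union>y\<in>Y. ball y (r y))"
    using compactE_image[OF \<open>compact K\<close>, of K "\<lambda>y. ball y (r y)"] by blast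
  have "purely_atomic_on \<mu> (\<Union>y\<in>Y. ball y (r y))"
    using Y(1,2) r by (intro purely_atomic_on_UN[OF m]) auto
  then show ?thesis
    using Y(3) by (rule purely_atomic_on_subset)
qed

lemma purely_atomic_on_bounded:
  fixes \<mu> :: "'a::{real_normed_vector,heine_borel} set \<Rightarrow> bit"
  assumes "is_b2_measure \<mu>" "bounded A" "derivable_on \<mu> (closure A)"
  shows "purely_atomic_on \<mu> A"
proof (rule purely_atomic_on_subset)
  have "compact (closure A)"
    using assms(2) by (simp add: compact_closure)
  then show "purely_atomic_on \<mu> (closure A)"
    using assms(1,3) by (intro purely_atomic_on_compact)
qed (rule closure_subset)

lemma finite_dmu_support:
  fixes \<mu> :: "'a::{real_normed_vector,heine_borel} set \<Rightarrow> bit"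
  assumes "is_b2_measure \<mu>" "bounded A" "derivable_on \<mu> (closure A)"
  shows "finite {x\<in>A. dmu \<mu> x = 1}"
proof -
  have "dmu \<mu> x = \<mu> {x}" if "x \<in> A" for x
  proof (rule dmu_eq_singleton)
    show "derivable_at \<mu> x"
      using assms(3) that closure_subset unfolding derivable_on_def by blast
  qed
  then have "{x\<in>A. dmu \<mu> x = 1} = {x\<in>A. \<mu> {x} = 1}"
    by auto
  moreover have "b2_summable (\<lambda>x. \<mu> {x}) A"
    using purely_atomic_on_bounded[OF assms] unfolding purely_atomic_on_def by blast
  ultimately show ?thesis
    unfolding b2_summable_def by simp
qed

lemma purely_atomic_on_partition:
  assumes atomic: "purely_atomic_on \<mu> A"
    and disj: "disjoint_family_on P I" and cover: "(\<Union>i\<in>I. P i) = A"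
  shows "b2_summable (\<lambda>i. \<mu> (P i)) I \<and> \<mu> A = b2_sum (\<lambda>i. \<mu> (P i)) I"
proof -
  have A: "b2_summable (\<lambda>x. \<mu> {x}) A" "\<mu> A = b2_sum (\<lambda>x. \<mu> {x}) A"
    using atomic unfolding purely_atomic_on_def by blast+
  have blocks: "b2_sum (\<lambda>x. \<mu> {x}) (P i) = \<mu> (P i)" if "i \<in> I" for i
  proof -
    have "P i \<subseteq> A"
      using cover that by blast
    then show ?thesis
      using atomic unfolding purely_atomic_on_def by simp
  qed
  show ?thesis
    using b2_sum_partition[OF A(1) disj cover] A(2) b2_sum_cong[of I, OF blocks] by simp
qed

theorem corollary5p14:
  fixes \<mu> :: "(real ^ 'n) set \<Rightarrow> bit"
  assumes meas: "is_b2_measure \<mu>"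
  shows
    "(\<forall>A. bounded A \<and> derivable_on \<mu> (closure A) \<longrightarrow>
        finite {x\<in>A. dmu \<mu> x = 1}
      \<and> (\<forall>x\<in>A. \<exists>\<epsilon>>0. \<forall>B. bounded B \<and> x \<in> B \<and> diameter B < \<epsilon> \<longrightarrow> \<mu> (B - {x}) = 0)
      \<and> (b2_summable (\<lambda>x. \<mu> {x}) A \<and> \<mu> A = b2_sum (\<lambda>x. \<mu> {x}) A)
      \<and> (\<forall>(I :: 'i set) (P :: 'i \<Rightarrow> (real ^ 'n) set).
            (\<forall>i\<in>I. P i \<noteq> {} \<and> P i \<subseteq> A) \<and> disjoint_family_on P I \<and> (\<Union>i\<in>I. P i) = A
            \<longrightarrow> b2_summable (\<lambda>i. \<mu> (P i)) I \<and> \<mu> A = b2_sum (\<lambda>i. \<mu> (P i)) I))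
   \<and> (derivable_on \<mu> UNIV \<longrightarrow> locally_finite_set {x. dmu \<mu> x = 1})"
proof (intro conjI allI impI ballI)
  fix A :: "(real ^ 'n) set"
  assume "bounded A \<and> derivable_on \<mu> (closure A)"
  then have A: "bounded A" "derivable_on \<mu> (closure A)"
    by auto
  have atomic: "purely_atomic_on \<mu> A"
    by (rule purely_atomic_on_bounded[OF meas A])
  show "finite {x\<in>A. dmu \<mu> x = 1}"
    by (rule finite_dmu_support[OF meas A])
  show "\<exists>\<epsilon>>0. \<forall>B. bounded B \<and> x \<in> B \<and> diameter B < \<epsilon> \<longrightarrow> \<mu> (B - {x}) = 0" if "x \<in> A" for x
    using A(2) that closure_subset unfolding derivable_on_def
    by (blast intro: derivable_at_punctured_vanish[OF meas])
  show "b2_summable (\<lambda>x. \<mu> {x}) A" "\<mu> A = b2_sum (\<lambda>x. \<mu> {x}) A"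
    using atomic unfolding purely_atomic_on_def by blast+
  fix I :: "'i set" and P :: "'i \<Rightarrow> (real ^ 'n) set"
  assume "(\<forall>i\<in>I. P i \<noteq> {} \<and> P i \<subseteq> A) \<and> disjoint_family_on P I \<and> (\<Union>i\<in>I. P i) = A"
  then show "b2_summable (\<lambda>i. \<mu> (P i)) I" "\<mu> A = b2_sum (\<lambda>i. \<mu> (P i)) I"
    using purely_atomic_on_partition[OF atomic] by blast+
next
  assume "derivable_on \<mu> UNIV"
  then have "finite {x\<in>A. dmu \<mu> x = 1}" if "bounded A" for A
    using finite_dmu_support[OF meas that] by (simp add: derivable_on_def)
  moreover have "A \<inter> {x. dmu \<mu> x = 1} = {x\<in>A. dmu \<mu> x = 1}" for A
    by blast
  ultimately show "locally_finite_set {x. dmu \<mu> x = 1}"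
    unfolding locally_finite_set_def by simp
qed

end
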